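(* Let $A=(a_{kl})$ be an $n\times n$ matrix with entries in $\{0,1,2,\dots\}\cup\{\infty\}$ and no zeros on the diagonal. Let $i\neq j$ be indices such that $a_{ij}\neq0$ and row $j$ of $A$ contains no $\infty$. Let $A'$ be obtained from $A$ by replacing row $i$ with $(a_{i1}+a_{j1},\dots,a_{in}+a_{jn})$ and then subtracting $1$ from the $(i,j)$ entry, so that the new $(i,j)$ entry is $a_{ij}+a_{jj}-1$. All other rows are unchanged. Then $A\sim_M A'$. Moreover: - $A'$ has no zeros on the diagonal; - if $A$ is irreducible, so is $A'$; - if the top-left $m\times m$ corner of $A$ is irreducible, so is the top-left $m\times m$ corner of $A'$.
   Context: Arithmetic conventions: $\infty+a=\infty$ and $\infty-1=\infty$. For a finite index set $X$ and an $X\times X$ matrix $A$ with entries in $\{0,1,2,\dots\}\cup\{\infty\}$, $G_A$ is the graph with vertex set $X$ and exactly $A(x,y)$ edges from $x$ to $y$. A matrix $A$ is irreducible if $G_A$ is strongly connected. For matrices, $A\sim_M B$ means $G_A\sim_M G_B$. A graph $G=(G^0,G^1,r,s)$ may have multiple edges and loops. A source receives no edges, a sink emits no edges, and an infinite emitter emits infinitely many edges. A vertex is singular if it is a sink or infinite emitter, and regular otherwise. Move-equivalence $\sim_M$ is the smallest equivalence relation on graphs with finitely many vertices such that $G\sim_M E$ whenever $E$ is isomorphic to a graph obtained from $G$ by one of the following moves. (S) Delete a regular source together with the edges it emits. (R) For a regular vertex $u$ emitting exactly one edge $f$, with $r(f)\neq u$, and all of whose incoming edges have the same source $v$: delete $u$,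 $f$ and the edges into $u$, and add for each $e\in r^{-1}(u)$ an edge $[ef]$ from $v$ to $r(f)$. (O) Out-splitting at a non-sink $v$ along a partition $\mathcal E_1,\dots,\mathcal E_n$ of $s^{-1}(v)$ with at most one infinite part. Replace $v$ by $v^1,\dots,v^n$. Each edge $e$ into $v$ becomes copies $e^1,\dots,e^n$ with $r(e^i)=v^i$ and source $s(e)$, or source $v^j$ if $s(e)=v$ and $e\in\mathcal E_j$. An edge from $v$ to $w\neq v$ lying in $\mathcal E_i$ gets source $v^i$. (I) In-splitting at a regular non-source $v$ along a partition $\mathcal E_1,\dots,\mathcal E_n$ of $r^{-1}(v)$. Replace $v$ by $v^1,\dots,v^n$. Each edge $e$ out of $v$ becomes copies $e^1,\dots,e^n$ with $s(e^i)=v^i$ and range $r(e)$, or range $v^j$ if $r(e)=v$ and $e\in\mathcal E_j$. An edge into $v$ from $w\neq v$ lying in $\mathcal E_i$ gets range $v^i$. *)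

theory Defs
  imports Main "HOL-Library.Extended_Nat" "HOL-Library.Nat_Bijection"
begin

record ('v, 'e) graph =
  gV :: "'v set"
  gE :: "'e set"
  gs :: "'e \<Rightarrow> 'v"
  gr :: "'e \<Rightarrow> 'v"

definition wf_graph :: "('v, 'e) graph \<Rightarrow> bool" where
  "wf_graph G \<longleftrightarrow> gs G ` gE G \<subseteq> gV G \<and> gr G ` gE G \<subseteq> gV G"

definition fin_graph :: "('v, 'e) graph \<Rightarrow> bool" where
  "fin_graph G \<longleftrightarrow> wf_graph G \<and> finite (gV G)"

definition out_edges :: "('v, 'e) graph \<Rightarrow> 'v \<Rightarrow> 'e set" where
  "out_edges G v = {e \<in> gE G. gs G e = v}"

definition in_edges :: "('v, 'e) graph \<Rightarrow> 'v \<Rightarrow> 'e set" where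
  "in_edges G v = {e \<in> gE G. gr G e = v}"

definition is_source :: "('v, 'e) graph \<Rightarrow> 'v \<Rightarrow> bool" where
  "is_source G v \<longleftrightarrow> in_edges G v = {}"

definition is_sink :: "('v, 'e) graph \<Rightarrow> 'v \<Rightarrow> bool" where
  "is_sink G v \<longleftrightarrow> out_edges G v = {}"

definition inf_emitter :: "('v, 'e) graph \<Rightarrow> 'v \<Rightarrow> bool" where
  "inf_emitter G v \<longleftrightarrow> infinite (out_edges G v)"

definition regular :: "('v, 'e) graph \<Rightarrow> 'v \<Rightarrow> bool" where
  "regular G v \<longleftrightarrow> \<not> is_sink G v \<and> \<not> inf_emitter G v"

definition graph_iso :: "('v, 'e) graph \<Rightarrow> ('w, 'f) graph \<Rightarrow> bool" where
  "graph_iso G H \<longleftrightarrow> (\<exists>fv fe. bij_betw fv (gV G) (gV H) \<and> bij_betw fe (gE G) (gE H) \<and>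
     (\<forall>e\<in>gE G. gs H (fe e) = fv (gs G e) \<and> gr H (fe e) = fv (gr G e)))"

definition is_partition :: "'e set \<Rightarrow> ('e \<Rightarrow> nat) \<Rightarrow> nat \<Rightarrow> bool" where
  "is_partition S P n \<longleftrightarrow> (\<forall>e\<in>S. P e < n) \<and> (\<forall>i<n. \<exists>e\<in>S. P e = i)"

definition moveS_ok :: "('v, 'e) graph \<Rightarrow> 'v \<Rightarrow> bool" where
  "moveS_ok G v \<longleftrightarrow> v \<in> gV G \<and> regular G v \<and> is_source G v"

definition moveS :: "('v, 'e) graph \<Rightarrow> 'v \<Rightarrow> ('v, 'e) graph" where
  "moveS G v = \<lparr>gV = gV G - {v}, gE = gE G - out_edges G v, gs = gs G, gr = gr G\<rparr>"

text \<open>(R) reduction; the new edge [ef] is represented as Inr e\<close>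
definition moveR_ok :: "('v, 'e) graph \<Rightarrow> 'v \<Rightarrow> 'e \<Rightarrow> bool" where
  "moveR_ok G u f \<longleftrightarrow> u \<in> gV G \<and> regular G u \<and> out_edges G u = {f} \<and> gr G f \<noteq> u \<and>
     (\<exists>v \<in> gV G. \<forall>e\<in>in_edges G u. gs G e = v)"

definition moveR :: "('v, 'e) graph \<Rightarrow> 'v \<Rightarrow> 'e \<Rightarrow> ('v, 'e + 'e) graph" where
  "moveR G u f = \<lparr>gV = gV G - {u},
     gE = Inl ` (gE G - {f} - in_edges G u) \<union> Inr ` in_edges G u,
     gs = (\<lambda>x. case x of Inl e \<Rightarrow> gs G e | Inr e \<Rightarrow> gs G e),
     gr = (\<lambda>x. case x of Inl e \<Rightarrow> gr G e | Inr e \<Rightarrow> gr G f)\<rparr>"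

text \<open>(O) out-splitting at v along the partition P (parts 0..n-1) of s^-1(v);
  old vertex w is Inl w, new vertex v^i is Inr i; old edge e (not into v) is Inl e,
  the copy e^i of an edge e into v is Inr (e, i).\<close>
definition moveO_ok :: "('v, 'e) graph \<Rightarrow> 'v \<Rightarrow> ('e \<Rightarrow> nat) \<Rightarrow> nat \<Rightarrow> bool" where
  "moveO_ok G v P n \<longleftrightarrow> v \<in> gV G \<and> \<not> is_sink G v \<and> is_partition (out_edges G v) P n \<and>
     card {i. i < n \<and> infinite {e \<in> out_edges G v. P e = i}} \<le> 1"

definition moveO :: "('v, 'e) graph \<Rightarrow> 'v \<Rightarrow> ('e \<Rightarrow> nat) \<Rightarrow> nat \<Rightarrow> ('v + nat, 'e + 'e \<times> nat) graph" where
  "moveO G v P n =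
    (let sv = (\<lambda>e. if gs G e = v then Inr (P e) else Inl (gs G e)) in
     \<lparr>gV = Inl ` (gV G - {v}) \<union> Inr ` {..<n},
      gE = Inl ` (gE G - in_edges G v) \<union> Inr ` (in_edges G v \<times> {..<n}),
      gs = (\<lambda>x. case x of Inl e \<Rightarrow> sv e | Inr (e, i) \<Rightarrow> sv e),
      gr = (\<lambda>x. case x of Inl e \<Rightarrow> Inl (gr G e) | Inr (e, i) \<Rightarrow> Inr i)\<rparr>)"

text \<open>(I) in-splitting at v along the partition P (parts 0..n-1) of r^-1(v);
  the copy e^i of an edge e out of v is Inr (e, i).\<close>
definition moveI_ok :: "('v, 'e) graph \<Rightarrow> 'v \<Rightarrow> ('e \<Rightarrow> nat) \<Rightarrow> nat \<Rightarrow> bool" where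
  "moveI_ok G v P n \<longleftrightarrow> v \<in> gV G \<and> regular G v \<and> \<not> is_source G v \<and>
     is_partition (in_edges G v) P n"

definition moveI :: "('v, 'e) graph \<Rightarrow> 'v \<Rightarrow> ('e \<Rightarrow> nat) \<Rightarrow> nat \<Rightarrow> ('v + nat, 'e + 'e \<times> nat) graph" where
  "moveI G v P n =
    (let rv = (\<lambda>e. if gr G e = v then Inr (P e) else Inl (gr G e)) in
     \<lparr>gV = Inl ` (gV G - {v}) \<union> Inr ` {..<n},
      gE = Inl ` (gE G - out_edges G v) \<union> Inr ` (out_edges G v \<times> {..<n}),
      gs = (\<lambda>x. case x of Inl e \<Rightarrow> Inl (gs G e) | Inr (e, i) \<Rightarrow> Inr i),
      gr = (\<lambda>x. case x of Inl e \<Rightarrow> rv e | Inr (e, i) \<Rightarrow> rv e)\<rparr>)"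

definition move_step :: "('v, 'e) graph \<Rightarrow> ('v, 'e) graph \<Rightarrow> bool" where
  "move_step G E \<longleftrightarrow> fin_graph G \<and> fin_graph E \<and>
    ((\<exists>v. moveS_ok G v \<and> graph_iso (moveS G v) E) \<or>
     (\<exists>u f. moveR_ok G u f \<and> graph_iso (moveR G u f) E) \<or>
     (\<exists>v P n. moveO_ok G v P n \<and> graph_iso (moveO G v P n) E) \<or>
     (\<exists>v P n. moveI_ok G v P n \<and> graph_iso (moveI G v P n) E))"

definition move_equiv :: "('v, 'e) graph \<Rightarrow> ('v, 'e) graph \<Rightarrow> bool" where
  "move_equiv G E \<longleftrightarrow> fin_graph G \<and> fin_graph E \<and> (symclp move_step)\<^sup>*\<^sup>* G E"

text \<open>G_A has vertex set {0..<n} and exactly A x y edges from x to y; edge number k from x to y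
  is encoded as the natural number prod_encode (prod_encode (x, y), k).\<close>
definition mgraph :: "nat \<Rightarrow> (nat \<Rightarrow> nat \<Rightarrow> enat) \<Rightarrow> (nat, nat) graph" where
  "mgraph n A = \<lparr>gV = {..<n},
     gE = {prod_encode (prod_encode (x, y), k) | x y k. x < n \<and> y < n \<and> enat k < A x y},
     gs = (\<lambda>e. fst (prod_decode (fst (prod_decode e)))),
     gr = (\<lambda>e. snd (prod_decode (fst (prod_decode e))))\<rparr>"

definition mat_move_equiv :: "nat \<Rightarrow> (nat \<Rightarrow> nat \<Rightarrow> enat) \<Rightarrow> (nat \<Rightarrow> nat \<Rightarrow> enat) \<Rightarrow> bool" where
  "mat_move_equiv n A B \<longleftrightarrow> move_equiv (mgraph n A) (mgraph n B)"

definition strongly_connected :: "('v, 'e) graph \<Rightarrow> bool" where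
  "strongly_connected G \<longleftrightarrow>
     (\<forall>x\<in>gV G. \<forall>y\<in>gV G. (x, y) \<in> {(gs G e, gr G e) | e. e \<in> gE G}\<^sup>*)"

text \<open>The (top-left) m x m matrix A is irreducible iff G_A is strongly connected.\<close>
definition irreducible_mat :: "nat \<Rightarrow> (nat \<Rightarrow> nat \<Rightarrow> enat) \<Rightarrow> bool" where
  "irreducible_mat m A \<longleftrightarrow> strongly_connected (mgraph m A)"

definition row_add :: "(nat \<Rightarrow> nat \<Rightarrow> enat) \<Rightarrow> nat \<Rightarrow> nat \<Rightarrow> (nat \<Rightarrow> nat \<Rightarrow> enat)" where
  "row_add A i j = (\<lambda>k l. if k = i then (if l = j then A i l + A j l - 1 else A i l + A j l)
                          else A k l)"

end

theory Submission
  imports Defs "HOL-Library.Countable_Set"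
begin

text \<open>In-splitting vertex \<open>j\<close> so that one edge \<open>f\<close> from \<open>i\<close> to \<open>j\<close> ends in a fresh copy \<open>j'\<close>
  produces a vertex \<open>j'\<close> whose only incoming edge is \<open>f\<close>, which has no loop (the loops at \<open>j\<close>
  stay with \<open>j\<close>) and whose out-edges are those of \<open>j\<close>. Such a vertex can be eliminated by
  out-splitting and reduction moves, which replaces \<open>f\<close> by one edge from \<open>i\<close> to the target of
  each out-edge of \<open>j'\<close>: row \<open>j\<close> is added to row \<open>i\<close>, and \<open>f\<close> itself is lost. No entry
  decreases (since \<open>a\<^sub>j\<^sub>j \<noteq> 0\<close>), so diagonal entries stay nonzero and strong connectivity
  of every leading corner is preserved.\<close>

definition ecard :: "'a set \<Rightarrow> enat" where
  "ecard S = (if finite S then enat (card S) else \<infinity>)"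

lemma ecard_empty [simp]: "ecard {} = 0"
  by (simp add: ecard_def zero_enat_def)

lemma ecard_singleton [simp]: "ecard {x} = 1"
  by (simp add: ecard_def one_enat_def)

lemma ecard_eq_0_iff: "ecard S = 0 \<longleftrightarrow> S = {}"
  by (auto simp: ecard_def zero_enat_def)

lemma ecard_eq_infinity_iff: "ecard S = \<infinity> \<longleftrightarrow> infinite S"
  by (simp add: ecard_def)

lemma ecard_image: "inj_on f S \<Longrightarrow> ecard (f ` S) = ecard S"
  by (simp add: ecard_def finite_image_iff card_image)

lemma ecard_Un_disjoint: "A \<inter> B = {} \<Longrightarrow> ecard (A \<union> B) = ecard A + ecard B"
  by (auto simp: ecard_def card_Un_disjoint)

lemma ecard_Times_singleton: "ecard (S \<times> {b}) = ecard S"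
proof -
  have "S \<times> {b} = (\<lambda>x. (x, b)) ` S" by auto
  then show ?thesis by (simp add: ecard_image inj_on_def)
qed

lemma ecard_Diff_singleton_if: "ecard (S - {x}) = (if x \<in> S then ecard S - 1 else ecard S)"
  by (auto simp: ecard_def one_enat_def)

lemma ecard_enat_less: "ecard {k. enat k < c} = c"
proof (cases c)
  case (enat d)
  then have "{k. enat k < c} = {..<d}" by auto
  then show ?thesis using enat by (simp add: ecard_def)
qed (simp add: ecard_def)

lemma bij_betw_if_ecard_eq:
  assumes "countable S" "countable T" "ecard S = ecard T"
  shows "\<exists>b. bij_betw b S T"
proof (cases "finite S")
  case True
  then have "finite T" "card S = card T" using assms(3) by (auto simp: ecard_def split: if_splits)
  then show ?thesis using True finite_same_card_bij by blast
next
  case False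
  then have "infinite T" using assms(3) by (auto simp: ecard_def split: if_splits)
  obtain eS :: "_ \<Rightarrow> nat" where "bij_betw eS S UNIV"
    using countableE_infinite assms(1) False by blast
  moreover obtain eT :: "_ \<Rightarrow> nat" where "bij_betw eT T UNIV"
    using countableE_infinite assms(2) \<open>infinite T\<close> by blast
  ultimately have "bij_betw (inv_into T eT \<circ> eS) S T"
    using bij_betw_inv_into bij_betw_trans by blast
  then show ?thesis by blast
qed

definition edges_between :: "('v, 'e) graph \<Rightarrow> 'v \<Rightarrow> 'v \<Rightarrow> 'e set" where
  "edges_between G x y = {e \<in> gE G. gs G e = x \<and> gr G e = y}"

lemma graph_iso_by_edge_counts:
  fixes G :: "('v, 'e::countable) graph" and H :: "('w, 'f::countable) graph"
  assumes wG: "wf_graph G" and wH: "wf_graph H"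
    and fv: "bij_betw fv (gV G) (gV H)"
    and counts: "\<forall>x\<in>gV G. \<forall>y\<in>gV G.
      ecard (edges_between G x y) = ecard (edges_between H (fv x) (fv y))"
  shows "graph_iso G H"
proof -
  have "\<forall>p. \<exists>b. fst p \<in> gV G \<and> snd p \<in> gV G \<longrightarrow>
      bij_betw b (edges_between G (fst p) (snd p)) (edges_between H (fv (fst p)) (fv (snd p)))"
    using counts bij_betw_if_ecard_eq by (metis countableI_type)
  then obtain b where b: "\<And>p. fst p \<in> gV G \<Longrightarrow> snd p \<in> gV G \<Longrightarrow>
      bij_betw (b p) (edges_between G (fst p) (snd p)) (edges_between H (fv (fst p)) (fv (snd p)))"
    by metis
  define fe where "fe e = b (gs G e, gr G e) e" for e
  have ends: "gs G e \<in> gV G" "gr G e \<in> gV G" if "e \<in> gE G" for e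
    using wG that by (auto simp: wf_graph_def)
  have fe_between: "fe e \<in> edges_between H (fv (gs G e)) (fv (gr G e))" if "e \<in> gE G" for e
    using b[of "(gs G e, gr G e)"] ends[OF that] that unfolding fe_def bij_betw_def by (auto simp: edges_between_def)
  have "inj_on fe (gE G)"
  proof (rule inj_onI)
    fix e1 e2 assume e: "e1 \<in> gE G" "e2 \<in> gE G" "fe e1 = fe e2"
    have "fv (gs G e1) = fv (gs G e2)" "fv (gr G e1) = fv (gr G e2)"
      using fe_between[OF e(1)] fe_between[OF e(2)] e(3) by (auto simp: edges_between_def)
    then have "gs G e1 = gs G e2" "gr G e1 = gr G e2"
      using fv ends e by (auto simp: bij_betw_def inj_on_def)
    then show "e1 = e2"
      using b[of "(gs G e1, gr G e1)"] ends[OF e(1)] e unfolding fe_def bij_betw_def inj_on_def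
      by (auto simp: edges_between_def)
  qed
  moreover have "fe ` gE G = gE H"
  proof
    show "fe ` gE G \<subseteq> gE H" using fe_between by (auto simp: edges_between_def)
  next
    show "gE H \<subseteq> fe ` gE G"
    proof
      fix e' assume e': "e' \<in> gE H"
      then have "gs H e' \<in> gV H" "gr H e' \<in> gV H" using wH by (auto simp: wf_graph_def)
      then obtain x y where xy: "x \<in> gV G" "y \<in> gV G" "gs H e' = fv x" "gr H e' = fv y"
        using fv unfolding bij_betw_def by (metis imageE)
      then have "e' \<in> edges_between H (fv x) (fv y)" using e' by (simp add: edges_between_def)
      then obtain e where e: "e \<in> edges_between G x y" "b (x, y) e = e'"
        using b[of "(x, y)"] xy unfolding bij_betw_def by (metis fst_conv snd_conv imageE)
      then have "e \<in> gE G" "fe e = e'" by (auto simp: fe_def edges_between_def)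
      then show "e' \<in> fe ` gE G" by blast
    qed
  qed
  moreover have "\<forall>e\<in>gE G. gs H (fe e) = fv (gs G e) \<and> gr H (fe e) = fv (gr G e)"
    using fe_between by (auto simp: edges_between_def)
  ultimately show ?thesis unfolding graph_iso_def bij_betw_def using fv[unfolded bij_betw_def] by blast
qed

lemma move_step_imp_move_equiv: "move_step G E \<Longrightarrow> move_equiv G E"
proof -
  assume step: "move_step G E"
  then have "(symclp move_step)\<^sup>*\<^sup>* G E" by (meson r_into_rtranclp symclpI(1))
  with step show ?thesis by (simp add: move_equiv_def move_step_def)
qed

lemma move_equiv_trans: "move_equiv G E \<Longrightarrow> move_equiv E F \<Longrightarrow> move_equiv G F"
  by (auto simp: move_equiv_def)

lemma wf_moveR:
  assumes "wf_graph G" "moveR_ok G u f"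
  shows "wf_graph (moveR G u f)"
proof -
  have "out_edges G u = {f}" "gr G f \<noteq> u" using assms(2) by (auto simp: moveR_ok_def)
  moreover from this have "f \<in> gE G" by (auto simp: out_edges_def)
  ultimately show ?thesis using assms(1)
    unfolding wf_graph_def moveR_def out_edges_def in_edges_def by (auto split: sum.splits)
qed

lemma wf_moveO:
  assumes "wf_graph G" "moveO_ok G v P n"
  shows "wf_graph (moveO G v P n)"
proof -
  have "P e < n" if "e \<in> gE G" "gs G e = v" for e
    using assms(2) that by (auto simp: moveO_ok_def is_partition_def out_edges_def)
  then show ?thesis using assms(1)
    unfolding wf_graph_def moveO_def in_edges_def Let_def
    by (auto simp: image_subset_iff split: sum.splits if_splits)
qed

lemma wf_moveI:
  assumes "wf_graph G" "moveI_ok G v P n"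
  shows "wf_graph (moveI G v P n)"
proof -
  have "P e < n" if "e \<in> gE G" "gr G e = v" for e
    using assms(2) that by (auto simp: moveI_ok_def is_partition_def in_edges_def)
  then show ?thesis using assms(1)
    unfolding wf_graph_def moveI_def out_edges_def Let_def
    by (auto simp: image_subset_iff split: sum.splits if_splits)
qed

lemma ecard_edges_between_moveR:
  fixes G :: "('v, 'e) graph"
  assumes "x \<noteq> u" "y \<noteq> u" "gs G f = u"
  shows "ecard (edges_between (moveR G u f) x y) =
    ecard (edges_between G x y) + (if y = gr G f then ecard (edges_between G x u) else 0)"
proof -
  have "edges_between (moveR G u f) x y =
      Inl ` edges_between G x y \<union> Inr ` (if y = gr G f then edges_between G x u else {})"
    using assms by (auto simp: edges_between_def moveR_def in_edges_def)
  moreover have "ecard (Inl ` A \<union> Inr ` B) = ecard A + ecard B" for A B :: "'e set"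
    by (subst ecard_Un_disjoint) (auto simp: ecard_image)
  ultimately show ?thesis by (simp add: ecard_image)
qed

lemma edges_between_moveO:
  "x \<noteq> v \<Longrightarrow> y \<noteq> v \<Longrightarrow>
    edges_between (moveO G v P n) (Inl x) (Inl y) = Inl ` edges_between G x y"
  "y \<noteq> v \<Longrightarrow>
    edges_between (moveO G v P n) (Inr a) (Inl y) = Inl ` {e \<in> edges_between G v y. P e = a}"
  "x \<noteq> v \<Longrightarrow> b < n \<Longrightarrow>
    edges_between (moveO G v P n) (Inl x) (Inr b) = Inr ` (edges_between G x v \<times> {b})"
  "b < n \<Longrightarrow>
    edges_between (moveO G v P n) (Inr a) (Inr b) = Inr ` ({e \<in> edges_between G v v. P e = a} \<times> {b})"
  by (auto simp: edges_between_def moveO_def Let_def in_edges_def split: if_splits)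

lemma edges_between_moveI:
  "x \<noteq> v \<Longrightarrow> y \<noteq> v \<Longrightarrow>
    edges_between (moveI G v P n) (Inl x) (Inl y) = Inl ` edges_between G x y"
  "x \<noteq> v \<Longrightarrow>
    edges_between (moveI G v P n) (Inl x) (Inr b) = Inl ` {e \<in> edges_between G x v. P e = b}"
  "a < n \<Longrightarrow> y \<noteq> v \<Longrightarrow>
    edges_between (moveI G v P n) (Inr a) (Inl y) = Inr ` (edges_between G v y \<times> {a})"
  "a < n \<Longrightarrow>
    edges_between (moveI G v P n) (Inr a) (Inr b) = Inr ` ({e \<in> edges_between G v v. P e = b} \<times> {a})"
  by (auto simp: edges_between_def moveI_def Let_def out_edges_def split: if_splits)

abbreviation medge :: "nat \<Rightarrow> nat \<Rightarrow> nat \<Rightarrow> nat" where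
  "medge x y k \<equiv> prod_encode (prod_encode (x, y), k)"

lemma mgraph_simps:
  "gV (mgraph N C) = {..<N}"
  "gs (mgraph N C) (medge x y k) = x"
  "gr (mgraph N C) (medge x y k) = y"
  by (simp_all add: mgraph_def)

lemma medge_in_mgraph_iff:
  "medge x y k \<in> gE (mgraph N C) \<longleftrightarrow> x < N \<and> y < N \<and> enat k < C x y"
  by (auto simp: mgraph_def)

lemma edge_mgraphE:
  assumes "e \<in> gE (mgraph N C)"
  obtains x y k where "e = medge x y k" "x < N" "y < N" "enat k < C x y"
  using assms by (auto simp: mgraph_def)

lemma wf_mgraph: "wf_graph (mgraph N C)"
  unfolding wf_graph_def by (auto elim!: edge_mgraphE simp: mgraph_simps)

lemma fin_mgraph: "fin_graph (mgraph N C)"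
  by (simp add: fin_graph_def wf_mgraph mgraph_simps)

lemma mgraph_cong:
  "(\<And>x y. x < N \<Longrightarrow> y < N \<Longrightarrow> C x y = D x y) \<Longrightarrow> mgraph N C = mgraph N D"
  unfolding mgraph_def by (auto intro!: Collect_cong)

lemma ecard_edges_between_mgraph:
  assumes "x < N" "y < N"
  shows "ecard (edges_between (mgraph N C) x y) = C x y"
proof -
  have "edges_between (mgraph N C) x y = medge x y ` {k. enat k < C x y}"
    using assms by (auto simp: edges_between_def mgraph_def)
  then show ?thesis by (simp add: ecard_image inj_on_def ecard_enat_less)
qed

lemma finite_out_edges_mgraph:
  assumes "\<forall>y<N. C x y \<noteq> \<infinity>" "x < N"
  shows "finite (out_edges (mgraph N C) x)"
proof -
  have "out_edges (mgraph N C) x = (\<Union>y<N. edges_between (mgraph N C) x y)"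
    using wf_mgraph[of N C] by (auto simp: out_edges_def edges_between_def wf_graph_def mgraph_simps)
  moreover have "finite (edges_between (mgraph N C) x y)" if "y < N" for y
    using assms that ecard_eq_infinity_iff ecard_edges_between_mgraph by metis
  ultimately show ?thesis by simp
qed

lemma graph_iso_mgraph_by_edge_counts:
  fixes G :: "('v, 'e::countable) graph"
  assumes "wf_graph G" "bij_betw fv (gV G) {..<N}"
    and "\<forall>x\<in>gV G. \<forall>y\<in>gV G. ecard (edges_between G x y) = C (fv x) (fv y)"
  shows "graph_iso G (mgraph N C)"
proof (rule graph_iso_by_edge_counts[where fv = fv])
  have "fv x < N" if "x \<in> gV G" for x using assms(2) that by (auto simp: bij_betw_def)
  then show "\<forall>x\<in>gV G. \<forall>y\<in>gV G.
      ecard (edges_between G x y) = ecard (edges_between (mgraph N C) (fv x) (fv y))"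
    using assms(3) by (simp add: ecard_edges_between_mgraph)
qed (use assms wf_mgraph in \<open>simp_all add: mgraph_simps\<close>)

definition split_numbering :: "nat \<Rightarrow> nat \<Rightarrow> nat + nat \<Rightarrow> nat" where
  "split_numbering N v z = (case z of Inl x \<Rightarrow> x | Inr a \<Rightarrow> if a = 0 then N else v)"

lemma bij_betw_split_numbering:
  assumes "v < N"
  shows "bij_betw (split_numbering N v) (Inl ` ({..<N} - {v}) \<union> Inr ` {..<2}) {..<Suc N}"
proof -
  have parts: "Inr ` {..<2} = {Inr 0, Inr (1::nat)}" by (auto simp: numeral_2_eq_2 lessThan_Suc)
  have "inj_on (split_numbering N v) (Inl ` ({..<N} - {v}) \<union> Inr ` {..<2})"
    unfolding parts using assms by (auto simp: inj_on_def split_numbering_def)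
  moreover have "split_numbering N v ` (Inl ` ({..<N} - {v}) \<union> Inr ` {..<2}) = {..<Suc N}"
  proof
    show "{..<Suc N} \<subseteq> split_numbering N v ` (Inl ` ({..<N} - {v}) \<union> Inr ` {..<2})"
    proof
      fix y assume "y \<in> {..<Suc N}"
      then consider "y = N" | "y = v" | "y < N" "y \<noteq> v" by fastforce
      then show "y \<in> split_numbering N v ` (Inl ` ({..<N} - {v}) \<union> Inr ` {..<2})"
        unfolding parts by cases (force simp: split_numbering_def)+
    qed
  qed (use assms in \<open>auto simp: parts split_numbering_def\<close>)
  ultimately show ?thesis by (simp add: bij_betw_def)
qed

lemma split_vertexE:
  assumes "z \<in> Inl ` ({..<N} - {v}) \<union> Inr ` {..<2::nat}"
  obtains x where "z = Inl x" "x < N" "x \<noteq> v" | "z = Inr 0" | "z = Inr 1"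
  using assms by (auto simp: numeral_2_eq_2 less_Suc_eq)

lemma move_step_mgraph_reduce:
  assumes t: "t < m" and u: "u < m" and edge: "C m t = 1"
    and row: "\<forall>y<Suc m. y \<noteq> t \<longrightarrow> C m y = 0"
    and column: "\<forall>x<Suc m. x \<noteq> u \<longrightarrow> C x m = 0"
  shows "move_step (mgraph (Suc m) C) (mgraph m (\<lambda>x y. C x y + (if y = t then C x m else 0)))"
proof -
  define G where "G = mgraph (Suc m) C"
  define f where "f = medge m t 0"
  have f_out: "out_edges G m = {f}"
  proof
    show "out_edges G m \<subseteq> {f}"
    proof
      fix e assume "e \<in> out_edges G m"
      then obtain y k where "e = medge m y k" "y < Suc m" "enat k < C m y"
        unfolding G_def out_edges_def by (auto elim: edge_mgraphE simp: mgraph_simps)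
      then show "e \<in> {f}" using row edge by (cases "y = t") (auto simp: f_def one_enat_def)
    qed
    show "{f} \<subseteq> out_edges G m"
      using t edge by (simp add: out_edges_def f_def G_def mgraph_simps medge_in_mgraph_iff one_enat_def)
  qed
  have "gs G e = u" if "e \<in> in_edges G m" for e
    using that column unfolding G_def in_edges_def
    by (auto elim!: edge_mgraphE simp: mgraph_simps)
  then have ok: "moveR_ok G m f"
    using f_out t u by (auto simp: moveR_ok_def regular_def is_sink_def inf_emitter_def f_def G_def mgraph_simps)
  have "graph_iso (moveR G m f) (mgraph m (\<lambda>x y. C x y + (if y = t then C x m else 0)))"
  proof (rule graph_iso_mgraph_by_edge_counts[where fv = id])
    have "gV (moveR G m f) = {..<m}" by (auto simp: moveR_def G_def mgraph_simps)
    then show "bij_betw id (gV (moveR G m f)) {..<m}"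
      and "\<forall>x\<in>gV (moveR G m f). \<forall>y\<in>gV (moveR G m f). ecard (edges_between (moveR G m f) x y) =
        C (id x) (id y) + (if id y = t then C (id x) m else 0)"
      by (auto simp: ecard_edges_between_moveR ecard_edges_between_mgraph G_def f_def mgraph_simps)
  qed (use wf_moveR[OF _ ok] wf_mgraph G_def in blast)
  then show ?thesis using ok fin_mgraph by (auto simp: move_step_def G_def)
qed

text \<open>Out-splitting the loop-free vertex \<open>m\<close> so that one of its edges to \<open>t\<close> leaves from a
  new vertex \<open>m + 1\<close>; both copies receive the edges into \<open>m\<close>.\<close>
lemma move_step_mgraph_detach_edge:
  assumes t: "t < m" and edge: "C m t \<noteq> 0" and other: "\<exists>y<m. (if y = t then 1 else 0) < C m y"
    and finite_row: "\<forall>y<m. C m y \<noteq> \<infinity>" and no_loop: "C m m = 0"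
  shows "move_step (mgraph (Suc m) C) (mgraph (Suc (Suc m)) (\<lambda>x y.
      if x = Suc m then (if y = t then 1 else 0)
      else if x = m then (if y = Suc m then 0 else if y = t then C m t - 1 else C m y)
      else (if y = Suc m then C x m else C x y)))"
    (is "move_step ?G (mgraph _ ?C')")
proof -
  define G where "G = ?G"
  define g where "g = medge m t 0"
  define P where "P e = (if e = g then 0 else 1::nat)" for e
  have parts: "{e \<in> S. P e = 0} = S \<inter> {g}" "{e \<in> S. P e = Suc 0} = S - {g}" for S
    by (auto simp: P_def)
  have g_between: "g \<in> edges_between G x y \<longleftrightarrow> x = m \<and> y = t" for x y
    using t edge by (auto simp: edges_between_def g_def G_def medge_in_mgraph_iff mgraph_simps
        zero_enat_def[symmetric] i0_less)
  obtain y where y: "y < m" "(if y = t then 1 else 0) < C m y" using other by blast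
  define e where "e = medge m y (if y = t then 1 else 0)"
  have "e \<in> out_edges G m" "e \<noteq> g"
    using y t by (auto simp: e_def g_def G_def out_edges_def medge_in_mgraph_iff mgraph_simps
        one_enat_def zero_enat_def)
  moreover have "g \<in> out_edges G m" using g_between by (auto simp: edges_between_def out_edges_def)
  moreover have "finite (out_edges G m)"
    using finite_out_edges_mgraph[of "Suc m" C m] finite_row no_loop
    by (auto simp: G_def less_Suc_eq zero_enat_def)
  ultimately have ok: "moveO_ok G m P 2"
    by (auto simp: moveO_ok_def is_sink_def is_partition_def P_def less_2_cases_iff G_def mgraph_simps)
  define MO where "MO = moveO G m P 2"
  have V: "gV MO = Inl ` ({..<Suc m} - {m}) \<union> Inr ` {..<2}"
    by (simp add: MO_def moveO_def Let_def G_def mgraph_simps)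
  have C: "ecard (edges_between G x y) = C x y" if "x < Suc m" "y < Suc m" for x y
    using that by (simp add: G_def ecard_edges_between_mgraph)
  have no_loop': "edges_between G m m = {}" using C[of m m] no_loop by (simp add: ecard_eq_0_iff)
  have counts: "ecard (edges_between MO z1 z2) = ?C' (split_numbering (Suc m) m z1) (split_numbering (Suc m) m z2)"
    if "z1 \<in> gV MO" "z2 \<in> gV MO" for z1 z2
    using that[unfolded V] t
    by (elim split_vertexE) (auto simp: MO_def edges_between_moveO ecard_image
        ecard_Times_singleton parts ecard_Diff_singleton_if g_between C split_numbering_def no_loop no_loop')
  have "graph_iso MO (mgraph (Suc (Suc m)) ?C')"
  proof (rule graph_iso_mgraph_by_edge_counts)
    show "wf_graph MO" using wf_moveO[OF _ ok] wf_mgraph by (simp add: MO_def G_def)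
    show "bij_betw (split_numbering (Suc m) m) (gV MO) {..<Suc (Suc m)}"
      unfolding V using bij_betw_split_numbering[of m "Suc m"] by simp
  qed (use counts in blast)
  then show ?thesis using ok fin_mgraph by (auto simp: move_step_def G_def MO_def)
qed

text \<open>In-splitting vertex \<open>j\<close> so that one edge from \<open>i\<close> to \<open>j\<close> now ends at a new vertex \<open>n\<close>;
  both copies emit the edges of \<open>j\<close>.\<close>
lemma move_step_mgraph_in_split:
  assumes ij: "i < n" "j < n" "i \<noteq> j" and edge: "A i j \<noteq> 0" and loop: "A j j \<noteq> 0"
    and finite_row: "\<forall>y<n. A j y \<noteq> \<infinity>"
  shows "move_step (mgraph n A) (mgraph (Suc n) (\<lambda>x y.
     if y = n then (if x = i then 1 else 0) else if x = n then A j y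
     else if y = j \<and> x = i then A i j - 1 else A x y))"
    (is "move_step ?G (mgraph _ ?A')")
proof -
  define G where "G = ?G"
  define f where "f = medge i j 0"
  define P where "P e = (if e = f then 0 else 1::nat)" for e
  have parts: "{e \<in> S. P e = 0} = S \<inter> {f}" "{e \<in> S. P e = Suc 0} = S - {f}" for S
    by (auto simp: P_def)
  have f_between: "f \<in> edges_between G x y \<longleftrightarrow> x = i \<and> y = j" for x y
    using ij edge by (auto simp: edges_between_def f_def G_def medge_in_mgraph_iff mgraph_simps
        zero_enat_def[symmetric] i0_less)
  define l where "l = medge j j 0"
  have "l \<in> in_edges G j" "l \<in> out_edges G j" "l \<noteq> f"
    using ij loop by (auto simp: l_def f_def G_def in_edges_def out_edges_def medge_in_mgraph_iff
        mgraph_simps zero_enat_def[symmetric] i0_less)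
  moreover have "f \<in> in_edges G j" using f_between by (auto simp: edges_between_def in_edges_def)
  moreover have "finite (out_edges G j)"
    using finite_out_edges_mgraph[of n A j] finite_row ij by (simp add: G_def)
  ultimately have ok: "moveI_ok G j P 2"
    using ij by (auto simp: moveI_ok_def regular_def is_sink_def inf_emitter_def is_source_def
        is_partition_def P_def less_2_cases_iff G_def mgraph_simps)
  define MI where "MI = moveI G j P 2"
  have V: "gV MI = Inl ` ({..<n} - {j}) \<union> Inr ` {..<2}"
    by (simp add: MI_def moveI_def Let_def G_def mgraph_simps)
  have A: "ecard (edges_between G x y) = A x y" if "x < n" "y < n" for x y
    using that by (simp add: G_def ecard_edges_between_mgraph)
  have counts: "ecard (edges_between MI z1 z2) = ?A' (split_numbering n j z1) (split_numbering n j z2)"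
    if "z1 \<in> gV MI" "z2 \<in> gV MI" for z1 z2
    using that[unfolded V] ij
    by (elim split_vertexE) (auto simp: MI_def edges_between_moveI ecard_image
        ecard_Times_singleton parts ecard_Diff_singleton_if f_between A split_numbering_def)
  have "graph_iso MI (mgraph (Suc n) ?A')"
  proof (rule graph_iso_mgraph_by_edge_counts)
    show "wf_graph MI" using wf_moveI[OF _ ok] wf_mgraph by (simp add: MI_def G_def)
    show "bij_betw (split_numbering n j) (gV MI) {..<Suc n}"
      unfolding V using bij_betw_split_numbering[of j n] ij by simp
  qed (use counts in blast)
  then show ?thesis using ok fin_mgraph by (auto simp: move_step_def G_def MI_def)
qed

lemma one_add_diff_one_enat: "b \<noteq> 0 \<Longrightarrow> 1 + (b - 1) = (b::enat)"
  by (cases b) (auto simp: one_enat_def zero_enat_def)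

text \<open>Detaching one edge from \<open>m\<close> to \<open>t\<close> and reducing the detached copy away replaces it by an
  edge from \<open>u\<close>, the source of the only edge into \<open>m\<close>, to \<open>t\<close>.\<close>
lemma move_equiv_mgraph_transfer_edge:
  assumes t: "t < m" and u: "u < m" and column: "\<forall>x<Suc m. C x m = (if x = u then 1 else 0)"
    and edge: "C m t \<noteq> 0" and other: "\<exists>y<m. (if y = t then 1 else 0) < C m y"
    and finite_row: "\<forall>y<m. C m y \<noteq> \<infinity>"
  shows "move_equiv (mgraph (Suc m) C) (mgraph (Suc m) (\<lambda>x y.
    if x = m \<and> y = t then C m t - 1 else if x = u \<and> y = t then C u t + 1 else C x y))"
proof -
  define C1 where "C1 x y =
    (if x = Suc m then (if y = t then 1 else 0)
     else if x = m then (if y = Suc m then 0 else if y = t then C m t - 1 else C m y)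
     else (if y = Suc m then C x m else C x y))" for x y
  have "C m m = 0" using column u by simp
  then have detach: "move_step (mgraph (Suc m) C) (mgraph (Suc (Suc m)) C1)"
    unfolding C1_def using t edge other finite_row by (intro move_step_mgraph_detach_edge)
  have reduce: "move_step (mgraph (Suc (Suc m)) C1)
      (mgraph (Suc m) (\<lambda>x y. C1 x y + (if y = t then C1 x (Suc m) else 0)))"
    using t u column by (intro move_step_mgraph_reduce) (auto simp: C1_def less_Suc_eq)
  have "mgraph (Suc m) (\<lambda>x y. C1 x y + (if y = t then C1 x (Suc m) else 0)) =
      mgraph (Suc m) (\<lambda>x y.
        if x = m \<and> y = t then C m t - 1 else if x = u \<and> y = t then C u t + 1 else C x y)"
    using t u column by (intro mgraph_cong) (auto simp: C1_def less_Suc_eq)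
  with move_equiv_trans[OF move_step_imp_move_equiv[OF detach] move_step_imp_move_equiv[OF reduce]]
  show ?thesis by simp
qed

text \<open>Induction on the number of out-edges of \<open>m\<close>, transferring them to \<open>u\<close> one at a time; the
  last one is removed together with \<open>m\<close> by a reduction.\<close>
lemma move_equiv_mgraph_eliminate:
  assumes "u < m" and "\<forall>x<Suc m. C x m = (if x = u then 1 else 0)"
    and "\<forall>y<m. C m y \<noteq> \<infinity>" and "\<exists>y<m. C m y \<noteq> 0"
  shows "move_equiv (mgraph (Suc m) C) (mgraph m (\<lambda>x y. C x y + (if x = u then C m y else 0)))"
proof -
  define s where "s = (\<Sum>y<m. the_enat (C m y))"
  then show ?thesis using assms
  proof (induction s arbitrary: C rule: less_induct)
    case (less s C)
    note s = less.prems(1) and u = less.prems(2) and column = less.prems(3)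
      and finite_row = less.prems(4)
    obtain t where t: "t < m" "C m t \<noteq> 0" using less.prems(5) by blast
    show ?case
    proof (cases "\<forall>y<m. C m y = (if y = t then 1 else 0)")
      case True
      then have "move_step (mgraph (Suc m) C) (mgraph m (\<lambda>x y. C x y + (if y = t then C x m else 0)))"
        using t u column by (intro move_step_mgraph_reduce) (auto simp: less_Suc_eq)
      moreover have "mgraph m (\<lambda>x y. C x y + (if y = t then C x m else 0)) =
          mgraph m (\<lambda>x y. C x y + (if x = u then C m y else 0))"
        using True column by (intro mgraph_cong) auto
      ultimately show ?thesis by (simp add: move_step_imp_move_equiv)
    next
      case False
      then obtain y where "y < m" "C m y \<noteq> (if y = t then 1 else 0)" by blast
      moreover have "1 < C m t \<longleftrightarrow> C m t \<noteq> 1"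
        using t(2) by (cases "C m t") (auto simp: one_enat_def zero_enat_def)
      ultimately have y: "y < m" "(if y = t then 1 else 0) < C m y"
        by (auto simp: i0_less)
      define D where "D x y =
        (if x = m \<and> y = t then C m t - 1 else if x = u \<and> y = t then C u t + 1 else C x y)" for x y
      have transfer: "move_equiv (mgraph (Suc m) C) (mgraph (Suc m) D)"
        unfolding D_def using t u column y finite_row by (intro move_equiv_mgraph_transfer_edge) blast+
      have D_row: "D m y = (if y = t then C m t - 1 else C m y)" if "y < m" for y
        using u by (simp add: D_def)
      define c where "c y = the_enat (C m y)" for y
      have c: "C m y = enat (c y)" if "y < m" for y using finite_row that by (auto simp: c_def)
      have "(\<Sum>y<m. the_enat (D m y)) = (\<Sum>y<m. if y = t then c t - 1 else c y)"
        by (rule sum.cong) (auto simp: D_row c one_enat_def)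
      also have "\<dots> = (c t - 1) + (\<Sum>y\<in>{..<m} - {t}. c y)" using t by (simp add: sum.remove)
      also have "\<dots> < c t + (\<Sum>y\<in>{..<m} - {t}. c y)" using t c by (auto simp: zero_enat_def)
      also have "\<dots> = s" using s t by (simp add: c_def sum.remove)
      finally have fewer_edges: "(\<Sum>y<m. the_enat (D m y)) < s" .
      have "D m y \<noteq> 0" using y D_row c by (auto simp: one_enat_def zero_enat_def)
      have "move_equiv (mgraph (Suc m) D) (mgraph m (\<lambda>x y. D x y + (if x = u then D m y else 0)))"
      proof (rule less.IH[OF fewer_edges, of D, OF refl u])
        show "\<forall>x<Suc m. D x m = (if x = u then 1 else 0)" using t column by (simp add: D_def)
        show "\<forall>y<m. D m y \<noteq> \<infinity>" using D_row c by (simp add: one_enat_def)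
      qed (use y(1) \<open>D m y \<noteq> 0\<close> in blast)
      moreover have "mgraph m (\<lambda>x y. D x y + (if x = u then D m y else 0)) =
          mgraph m (\<lambda>x y. C x y + (if x = u then C m y else 0))"
        using t u by (intro mgraph_cong) (auto simp: D_def one_add_diff_one_enat)
      ultimately show ?thesis using move_equiv_trans[OF transfer] by simp
    qed
  qed
qed

lemma strongly_connected_mgraph_mono:
  assumes le: "\<forall>x<m. \<forall>y<m. A x y \<le> B x y" and sc: "strongly_connected (mgraph m A)"
  shows "strongly_connected (mgraph m B)"
proof -
  have "{(gs (mgraph m A) e, gr (mgraph m A) e) | e. e \<in> gE (mgraph m A)} \<subseteq>
        {(gs (mgraph m B) e, gr (mgraph m B) e) | e. e \<in> gE (mgraph m B)}"
  proof clarify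
    fix e assume "e \<in> gE (mgraph m A)"
    then obtain x y k where e: "e = medge x y k" "x < m" "y < m" "enat k < A x y"
      by (auto elim: edge_mgraphE)
    then have "e \<in> gE (mgraph m B)"
      using le by (auto simp: medge_in_mgraph_iff intro: order_less_le_trans)
    then show "\<exists>e'. (gs (mgraph m A) e, gr (mgraph m A) e) = (gs (mgraph m B) e', gr (mgraph m B) e')
        \<and> e' \<in> gE (mgraph m B)"
      using e by (intro exI[of _ e]) (simp add: mgraph_simps)
  qed
  from rtrancl_mono[OF this] sc show ?thesis unfolding strongly_connected_def by (auto simp: mgraph_simps)
qed

lemma diff_one_add_enat: "a \<noteq> 0 \<Longrightarrow> a - 1 + b = a + b - (1::enat)"
  by (cases a; cases b) (auto simp: one_enat_def zero_enat_def)

lemma le_row_add: "A j j \<noteq> 0 \<Longrightarrow> A x y \<le> row_add A i j x y"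
  by (cases "A i y"; cases "A j y") (auto simp: row_add_def one_enat_def zero_enat_def)

theorem lemma7p1:
  fixes n i j :: nat and A :: "nat \<Rightarrow> nat \<Rightarrow> enat"
  assumes diag: "\<forall>k<n. A k k \<noteq> 0"
    and ij: "i < n" "j < n" "i \<noteq> j"
    and aij: "A i j \<noteq> 0"
    and rowj: "\<forall>l<n. A j l \<noteq> \<infinity>"
  shows "mat_move_equiv n A (row_add A i j)
     \<and> (\<forall>k<n. row_add A i j k k \<noteq> 0)
     \<and> (irreducible_mat n A \<longrightarrow> irreducible_mat n (row_add A i j))
     \<and> (\<forall>m\<le>n. irreducible_mat m A \<longrightarrow> irreducible_mat m (row_add A i j))"
proof -
  have Ajj: "A j j \<noteq> 0" using diag ij by simp
  define H where "H x y = (if y = n then (if x = i then 1 else 0) else if x = n then A j y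
     else if y = j \<and> x = i then A i j - 1 else A x y)" for x y
  have "move_step (mgraph n A) (mgraph (Suc n) H)"
    unfolding H_def using ij aij Ajj rowj by (rule move_step_mgraph_in_split)
  moreover have "move_equiv (mgraph (Suc n) H) (mgraph n (\<lambda>x y. H x y + (if x = i then H n y else 0)))"
    using ij rowj Ajj by (intro move_equiv_mgraph_eliminate) (auto simp: H_def less_Suc_eq)
  moreover have "mgraph n (\<lambda>x y. H x y + (if x = i then H n y else 0)) = mgraph n (row_add A i j)"
    using ij aij by (intro mgraph_cong) (auto simp: H_def row_add_def diff_one_add_enat)
  ultimately have "mat_move_equiv n A (row_add A i j)"
    unfolding mat_move_equiv_def by (metis move_equiv_trans move_step_imp_move_equiv)
  moreover have "\<forall>k<n. row_add A i j k k \<noteq> 0" using diag ij by (auto simp: row_add_def)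
  moreover have "\<forall>m. irreducible_mat m A \<longrightarrow> irreducible_mat m (row_add A i j)"
    using le_row_add[of A j, OF Ajj] strongly_connected_mgraph_mono unfolding irreducible_mat_def by blast
  ultimately show ?thesis by blast
qed

end
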